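(* Let $(\mathcal{L},\mathcal{D}(\mathcal{L}))$ be the generator of a $C_0$-contraction semigroup on a Banach space $\mathcal{X}$ and $M\in\mathcal{B}(\mathcal{X})$ a contraction such that $\|M^n-P\|_\infty\le\tilde c\,\delta^n$ for some projection $P$, some $\delta\in(0,1)$, $\tilde c\ge0$ and all $n\in\mathbb{N}$. Assume there is $b\ge0$ such that for all $t\ge0$ $$\|Pe^{t\mathcal{L}}(\mathbf{1}-P)\|_\infty\le tb\quad\text{and}\quad\|(\mathbf{1}-P)e^{t\mathcal{L}}P\|_\infty\le tb.$$ If $(P\mathcal{L}P,\mathcal{D}(\mathcal{L}P))$ is the generator of a $C_0$-semigroup, then for $t\ge0$ there exist a constant $c>0$ and $n_0\in\mathbb{N}$ such that $\tilde\delta:=\tilde c\,\delta^{n_0}<1$ and for all $n\in\mathbb{N}$ and all $x\in\mathcal{D}((\mathcal{L}P)^2)$ $$\Big\|\big(M^{n_0}e^{\frac tn\mathcal{L}}\big)^nx-e^{tP\mathcal{L}P}Px\Big\|\le\frac cn\big(\|x\|+\|\mathcal{L}Px\|+\|(\mathcal{L}P)^2x\|\big)+\tilde\delta^n\|x\|.$$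
   Context: $\mathcal{B}(\mathcal{X})$: bounded operators with operator norm $\|\cdot\|_\infty$; $\mathbf{1}$ the identity; contraction: norm at most $1$; projection: bounded idempotent. A $C_0$-contraction semigroup is a strongly continuous semigroup of contractions, denoted $e^{t\mathcal{L}}$ by its generator. Domains: $\mathcal{D}(\mathcal{L}P)=\{x:Px\in\mathcal{D}(\mathcal{L})\}$, $\mathcal{D}((\mathcal{L}P)^2)=\{x\in\mathcal{D}(\mathcal{L}P):\mathcal{L}Px\in\mathcal{D}(\mathcal{L}P)\}$; $P\mathcal{L}P$ is considered on $\mathcal{D}(\mathcal{L}P)$. *)

theory Defs
  imports "HOL-Analysis.Analysis"
begin

definition blinfun_pow :: "('a::real_normed_vector \<Rightarrow>\<^sub>L 'a) \<Rightarrow> nat \<Rightarrow> ('a \<Rightarrow>\<^sub>L 'a)" where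
  "blinfun_pow A n = ((\<lambda>B. A o\<^sub>L B) ^^ n) id_blinfun"

definition c0_semigroup :: "(real \<Rightarrow> ('a::banach \<Rightarrow>\<^sub>L 'a)) \<Rightarrow> bool" where
  "c0_semigroup T \<longleftrightarrow>
     T 0 = id_blinfun \<and>
     (\<forall>s\<ge>0. \<forall>t\<ge>0. T (s + t) = T s o\<^sub>L T t) \<and>
     (\<forall>x. ((\<lambda>t. blinfun_apply (T t) x) \<longlongrightarrow> x) (at_right 0))"

definition c0_contraction_semigroup :: "(real \<Rightarrow> ('a::banach \<Rightarrow>\<^sub>L 'a)) \<Rightarrow> bool" where
  "c0_contraction_semigroup T \<longleftrightarrow> c0_semigroup T \<and> (\<forall>t\<ge>0. norm (T t) \<le> 1)"

definition is_generator :: "(real \<Rightarrow> ('a::banach \<Rightarrow>\<^sub>L 'a)) \<Rightarrow> ('a \<Rightarrow> 'a) \<Rightarrow> 'a set \<Rightarrow> bool" where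
  "is_generator T L D \<longleftrightarrow>
     D = {x. \<exists>y. ((\<lambda>h. (1 / h) *\<^sub>R (blinfun_apply (T h) x - x)) \<longlongrightarrow> y) (at_right 0)} \<and>
     (\<forall>x\<in>D. ((\<lambda>h. (1 / h) *\<^sub>R (blinfun_apply (T h) x - x)) \<longlongrightarrow> L x) (at_right 0))"

end

(*
  Write Q = M^n0, d = ct * delta^n0 < 1 and s = t/n, and split each iterate v_k = (Q T(s))^k x
  into its range part P v_k and its remainder r_k = v_k - P v_k.  Since Q - P vanishes on the
  range of P and has norm at most d, while (1 - P) T(s) P is O(s), the remainders satisfy
  |r_(k+1)| <= d (O(s) |x| + |r_k|), hence |r_k| <= d^k |x| + O(s) |x|.  Since P T(s) (1 - P) is
  O(s) as well, the range parts follow the iterates of the compression W = P T(s) P up to an error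
  O(s) * sum |r_k| = O(1/n).  Finally, a Chernoff argument compares W^n P x with e^(tPLP) P x:
  along orbits of the compressed semigroup, W and e^(sPLP) agree up to O(s^2), by second order
  Taylor expansion of both, because on the range of P the generator L differs from PLP only by
  the O(1) leak (1 - P) L P.
*)
theory Submission
  imports Defs
begin

section \<open>Powers of bounded operators\<close>

lemma blinfun_compose_assoc: "(A o\<^sub>L B) o\<^sub>L C = A o\<^sub>L (B o\<^sub>L C)"
  by (rule blinfun_eqI) simp

lemma norm_blinfun_apply_le:
  fixes A :: "'a::real_normed_vector \<Rightarrow>\<^sub>L 'b::real_normed_vector"
  shows "norm A \<le> K \<Longrightarrow> norm (A x) \<le> K * norm x"
  by (meson mult_right_mono norm_blinfun norm_ge_zero order_trans)

lemma blinfun_compose_id [simp]: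
  "id_blinfun o\<^sub>L A = A" "A o\<^sub>L id_blinfun = A"
  by (auto intro: blinfun_eqI)

lemma blinfun_pow_0 [simp]: "blinfun_pow A 0 = id_blinfun"
  by (simp add: blinfun_pow_def)

lemma blinfun_pow_Suc: "blinfun_pow A (Suc n) = A o\<^sub>L blinfun_pow A n"
  by (simp add: blinfun_pow_def)

lemma blinfun_pow_Suc_right: "blinfun_pow A (Suc n) = blinfun_pow A n o\<^sub>L A"
  by (induction n) (auto intro: blinfun_eqI simp: blinfun_pow_Suc blinfun_compose_assoc[symmetric])

lemma norm_blinfun_pow_le: "norm (blinfun_pow A n) \<le> norm A ^ n"
proof (induction n)
  case 0
  show ?case using norm_blinfun_id_le by simp
next
  case (Suc n)
  have "norm (blinfun_pow A (Suc n)) \<le> norm A * norm (blinfun_pow A n)"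
    unfolding blinfun_pow_Suc by (rule norm_blinfun_compose)
  also have "\<dots> \<le> norm A ^ Suc n"
    using Suc.IH by (simp add: mult_left_mono)
  finally show ?case .
qed

lemma norm_blinfun_pow_le_one: "norm A \<le> 1 \<Longrightarrow> norm (blinfun_pow A n) \<le> 1"
  using norm_blinfun_pow_le[of A n] by (meson norm_ge_zero order_trans power_le_one)

lemma blinfun_pow_absorb_right: "A o\<^sub>L P = P \<Longrightarrow> blinfun_pow A n o\<^sub>L P = P"
  by (induction n) (simp_all add: blinfun_pow_Suc blinfun_compose_assoc)

lemma blinfun_pow_absorb_left: "P o\<^sub>L A = P \<Longrightarrow> P o\<^sub>L blinfun_pow A n = P"
  by (induction n) (simp_all add: blinfun_pow_Suc_right blinfun_compose_assoc[symmetric])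

lemma
  assumes lim: "(\<lambda>n. blinfun_pow M n) \<longlonglongrightarrow> P"
  shows blinfun_pow_limit_absorb_right: "M o\<^sub>L P = P"
    and blinfun_pow_limit_absorb_left: "P o\<^sub>L M = P"
proof -
  have Suc_lim: "(\<lambda>n. blinfun_pow M (Suc n)) \<longlonglongrightarrow> P"
    using lim by (rule LIMSEQ_Suc)
  have "(\<lambda>n. M o\<^sub>L blinfun_pow M n) \<longlonglongrightarrow> (M o\<^sub>L P)"
    by (intro tendsto_intros lim)
  then show "M o\<^sub>L P = P"
    using Suc_lim by (simp add: blinfun_pow_Suc LIMSEQ_unique)
  have "(\<lambda>n. blinfun_pow M n o\<^sub>L M) \<longlonglongrightarrow> (P o\<^sub>L M)"
    by (intro tendsto_intros lim)
  then show "P o\<^sub>L M = P"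
    using Suc_lim by (simp add: blinfun_pow_Suc_right LIMSEQ_unique)
qed

lemma norm_blinfun_pow_limit_le_one:
  assumes "norm M \<le> 1" and "(\<lambda>n. blinfun_pow M n) \<longlonglongrightarrow> P"
  shows "norm P \<le> 1"
  using assms by (intro Lim_norm_ubound[OF trivial_limit_sequentially])
    (auto intro: always_eventually norm_blinfun_pow_le_one)

section \<open>Local boundedness of \<open>C\<^sub>0\<close>-semigroups\<close>

lemma uniform_boundedness:
  fixes F :: "('a::banach \<Rightarrow>\<^sub>L 'b::real_normed_vector) set"
  assumes pointwise: "\<And>x. \<exists>B. \<forall>f\<in>F. norm (f x) \<le> B"
  shows "\<exists>B. \<forall>f\<in>F. norm f \<le> B"
proof -
  define E where "E k = {x. \<forall>f\<in>F. norm (f x) \<le> real k}" for k :: nat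
  have closed_E: "closed (E k)" for k
  proof -
    have "E k = (\<Inter>f\<in>F. {x. norm (blinfun_apply f x) \<le> real k})"
      by (auto simp: E_def)
    then show ?thesis
      by (simp add: closed_INT closed_Collect_le continuous_on_norm blinfun.continuous_on)
  qed
  have cover: "\<Union>(range E) = UNIV"
  proof -
    have "\<exists>k. x \<in> E k" for x
    proof -
      obtain B where "\<forall>f\<in>F. norm (f x) \<le> B"
        using pointwise by blast
      moreover obtain k where "B \<le> real k"
        using real_arch_simple by blast
      ultimately have "x \<in> E k"
        unfolding E_def by (auto intro: order_trans)
      then show ?thesis ..
    qed
    then show ?thesis by blast
  qed
  have "\<exists>k. interior (E k) \<noteq> {}"
  proof (rule ccontr)
    assume "\<not> ?thesis"
    then have "closedin euclidean S \<and> euclidean interior_of S = {}" if "S \<in> range E" for S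
      using that closed_E closed_closedin by auto
    then have "euclidean interior_of \<Union>(range E) = {}"
      by (intro Baire_category_alt disjI1 completely_metrizable_space_euclidean) auto
    then show False
      by (simp add: cover)
  qed
  then obtain k x0 where "x0 \<in> interior (E k)"
    by blast
  then obtain r where r: "0 < r" "ball x0 r \<subseteq> E k"
    using open_contains_ball_eq open_interior interior_subset by (metis subset_trans)
  have small: "norm (f y) \<le> 2 * real k" if "f \<in> F" "norm y < r" for f y
  proof -
    have "x0 \<in> ball x0 r" "x0 + y \<in> ball x0 r"
      using r(1) that(2) by (simp_all add: dist_norm)
    then have "norm (f (x0 + y)) \<le> real k" "norm (f x0) \<le> real k"
      using r(2) that(1) unfolding E_def by blast+
    then show ?thesis
      using norm_triangle_ineq4[of "f (x0 + y)" "f x0"] by (simp add: blinfun.add_right)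
  qed
  have "norm f \<le> 4 * real k / r" if "f \<in> F" for f
  proof (rule norm_blinfun_bound)
    fix y
    show "norm (f y) \<le> 4 * real k / r * norm y"
    proof (cases "y = 0")
      case False
      define c where "c = r / (2 * norm y)"
      have "c > 0" "norm (c *\<^sub>R y) < r"
        using False r by (simp_all add: c_def)
      then have "c * norm (f y) \<le> 2 * real k"
        using small[OF that, of "c *\<^sub>R y"] by (simp add: blinfun.scaleR_right)
      then show ?thesis
        using False r by (simp add: c_def field_simps)
    qed simp
  qed (use r in simp)
  then show ?thesis by blast
qed

lemma c0_semigroup_0 [simp]: "c0_semigroup U \<Longrightarrow> U 0 = id_blinfun"
  unfolding c0_semigroup_def by simp

lemma c0_semigroup_add:
  "c0_semigroup U \<Longrightarrow> 0 \<le> s \<Longrightarrow> 0 \<le> r \<Longrightarrow> U (s + r) = U s o\<^sub>L U r"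
  unfolding c0_semigroup_def by blast

lemma c0_semigroup_apply_add:
  "c0_semigroup U \<Longrightarrow> 0 \<le> s \<Longrightarrow> 0 \<le> r \<Longrightarrow> U s (U r x) = U (s + r) x"
  by (simp add: c0_semigroup_add)

lemma c0_semigroup_tendsto_0:
  "c0_semigroup U \<Longrightarrow> ((\<lambda>h. U h x) \<longlongrightarrow> x) (at_right 0)"
  unfolding c0_semigroup_def by simp

lemma blinfun_pow_c0_semigroup:
  assumes "c0_semigroup U" and "0 \<le> s"
  shows "blinfun_pow (U s) n = U (real n * s)"
proof (induction n)
  case (Suc n)
  have "U (real (Suc n) * s) = U (s + real n * s)"
    by (simp add: algebra_simps)
  with Suc assms show ?case
    by (simp add: blinfun_pow_Suc c0_semigroup_add)
qed (use assms in simp)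

lemma c0_semigroup_bounded_near_0:
  assumes U: "c0_semigroup U"
  shows "\<exists>h>0. \<exists>K. \<forall>r\<in>{0..h}. norm (U r) \<le> K"
proof (rule ccontr)
  assume "\<not> ?thesis"
  then have "\<forall>k::nat. \<exists>r. r \<in> {0..1 / Suc k} \<and> real k + 1 < norm (U r)"
    by (metis (full_types) linorder_not_le of_nat_0_less_iff zero_less_Suc zero_less_divide_1_iff)
  then obtain rr where rr: "\<And>k. rr k \<in> {0..1 / Suc k}" "\<And>k. real k + 1 < norm (U (rr k))"
    by metis
  have pos: "0 < rr k" for k
  proof -
    have "rr k \<noteq> 0"
      using rr(2)[of k] norm_blinfun_id_le U by (smt (verit) c0_semigroup_0 of_nat_0_le_iff)
    then show ?thesis
      using rr(1)[of k] by simp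
  qed
  have "rr \<longlonglongrightarrow> 0"
    using rr(1) pos
    by (intro tendsto_sandwich[OF _ _ tendsto_const LIMSEQ_Suc[OF lim_const_over_n[of 1]]])
      (auto intro: always_eventually less_imp_le)
  moreover have "\<forall>\<^sub>F k in sequentially. rr k \<in> {0<..} \<and> rr k \<noteq> 0"
    using pos by (intro always_eventually allI) (simp add: less_imp_neq[symmetric])
  ultimately have rr_lim: "filterlim rr (at_right 0) sequentially"
    by (simp add: filterlim_at)
  have "\<exists>B. \<forall>f\<in>range (U \<circ> rr). norm (f x) \<le> B" for x
  proof -
    have "(\<lambda>k. U (rr k) x) \<longlonglongrightarrow> x"
      by (rule filterlim_compose[OF c0_semigroup_tendsto_0[OF U] rr_lim])
    then have "Bseq (\<lambda>k. U (rr k) x)"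
      by (rule convergent_imp_Bseq[OF convergentI])
    then obtain B where "\<forall>k. norm (U (rr k) x) \<le> B"
      by (rule BseqE) blast
    then show ?thesis by auto
  qed
  then obtain B where "\<forall>f\<in>range (U \<circ> rr). norm f \<le> B"
    using uniform_boundedness by blast
  then have "norm (U (rr k)) \<le> B" for k
    by simp
  moreover obtain k where "B \<le> real k"
    using real_arch_simple by blast
  ultimately show False
    using rr(2)[of k] by (smt (verit))
qed

lemma c0_semigroup_bounded_on_interval:
  assumes U: "c0_semigroup U"
  obtains K where "1 \<le> K" and "\<And>r. r \<in> {0..t} \<Longrightarrow> norm (U r) \<le> K"
proof -
  obtain h K0 where h: "0 < h" and K0: "\<And>r. r \<in> {0..h} \<Longrightarrow> norm (U r) \<le> K0"
    using c0_semigroup_bounded_near_0[OF U] by blast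
  define K where "K = max 1 K0"
  obtain N :: nat where N: "t / h \<le> real N" "1 \<le> N"
    by (metis One_nat_def max.cobounded1 max.cobounded2 of_nat_max real_arch_simple order_trans)
  text \<open>Write \<open>U r\<close> as the \<open>N\<close>-th power of \<open>U (r / N)\<close>, where \<open>r / N \<le> h\<close>.\<close>
  have "norm (U r) \<le> K ^ N" if r: "r \<in> {0..t}" for r
  proof -
    have "r / N \<le> h"
      using r N h by (simp add: divide_le_eq field_simps)
    then have step: "norm (U (r / N)) \<le> K"
      using r N K0[of "r / N"] by (simp add: K_def le_max_iff_disj)
    have "U r = blinfun_pow (U (r / N)) N"
      using r N U by (simp add: blinfun_pow_c0_semigroup)
    then have "norm (U r) \<le> norm (U (r / N)) ^ N"
      by (simp add: norm_blinfun_pow_le)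
    also have "\<dots> \<le> K ^ N"
      using step by (simp add: power_mono)
    finally show ?thesis .
  qed
  moreover have "1 \<le> K ^ N"
    by (simp add: K_def)
  ultimately show ?thesis
    using that by blast
qed

section \<open>Orbits through the domain of the generator\<close>

lemma is_generator_tendsto:
  "is_generator U G E \<Longrightarrow> y \<in> E \<Longrightarrow> ((\<lambda>h. (1 / h) *\<^sub>R (U h y - y)) \<longlongrightarrow> G y) (at_right 0)"
  unfolding is_generator_def by blast

lemma is_generator_memI:
  "is_generator U G E \<Longrightarrow> ((\<lambda>h. (1 / h) *\<^sub>R (U h y - y)) \<longlongrightarrow> z) (at_right 0) \<Longrightarrow> y \<in> E"
  unfolding is_generator_def by blast

lemma is_generator_commute:
  assumes U: "c0_semigroup U" and G: "is_generator U G E" and y: "y \<in> E" and r: "0 \<le> r"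
  shows is_generator_semigroup_mem: "U r y \<in> E"
    and is_generator_semigroup_commute: "G (U r y) = U r (G y)"
proof -
  have "((\<lambda>h. U r ((1 / h) *\<^sub>R (U h y - y))) \<longlongrightarrow> U r (G y)) (at_right 0)"
    by (intro blinfun.tendsto tendsto_const is_generator_tendsto[OF G y])
  moreover have "\<forall>\<^sub>F h in at_right 0.
      U r ((1 / h) *\<^sub>R (U h y - y)) = (1 / h) *\<^sub>R (U h (U r y) - U r y)"
    using eventually_at_right_less[of 0]
    by eventually_elim
      (use U r in \<open>simp add: c0_semigroup_apply_add add.commute blinfun.scaleR_right blinfun.diff_right\<close>)
  ultimately have lim: "((\<lambda>h. (1 / h) *\<^sub>R (U h (U r y) - U r y)) \<longlongrightarrow> U r (G y)) (at_right 0)"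
    by (rule Lim_transform_eventually)
  then show mem: "U r y \<in> E"
    by (rule is_generator_memI[OF G])
  show "G (U r y) = U r (G y)"
    using tendsto_unique[OF trivial_limit_at_right_real is_generator_tendsto[OF G mem] lim] .
qed

lemma c0_semigroup_orbit_has_vector_derivative:
  assumes U: "c0_semigroup U" and G: "is_generator U G E" and y: "y \<in> E" and r: "0 \<le> r"
  shows "((\<lambda>u. U u y) has_vector_derivative U r (G y)) (at r within {0..})"
proof -
  obtain K where K: "\<And>u. u \<in> {0..r + 1} \<Longrightarrow> norm (U u) \<le> K"
    using c0_semigroup_bounded_on_interval[OF U] by metis
  define q where "q h = (1 / h) *\<^sub>R (U h y - y)" for h
  define e where "e h = norm (q h - G y) + norm (U h (G y) - G y)" for h
  have e: "(e \<longlongrightarrow> 0) (at_right 0)"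
    unfolding e_def q_def
    using tendsto_add[OF tendsto_norm_zero[OF LIM_zero[OF is_generator_tendsto[OF G y]]]
        tendsto_norm_zero[OF LIM_zero[OF c0_semigroup_tendsto_0[OF U, of "G y"]]]]
    by simp
  text \<open>On both sides of \<open>r\<close> the error is an operator \<open>U (min u r)\<close>, bounded by \<open>K\<close>,
    applied to a vector of norm at most \<open>\<bar>u - r\<bar> * e \<bar>u - r\<bar>\<close>.\<close>
  have increment:
    "norm (U u y - U r y - (u - r) *\<^sub>R U r (G y)) \<le> norm (u - r) * (K * e (norm (u - r)))"
    if u: "u \<in> {0..r + 1}" "u \<noteq> r" for u
  proof (cases "r < u")
    case True
    define h where "h = u - r"
    have h: "0 < h" "u = r + h" "norm (u - r) = h"
      using True by (simp_all add: h_def)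
    have "U u y - U r y - (u - r) *\<^sub>R U r (G y) = h *\<^sub>R U r (q h - G y)"
      using h U r by (simp add: q_def c0_semigroup_apply_add add.commute blinfun.diff_right
          blinfun.scaleR_right scaleR_right_diff_distrib)
    also have "norm \<dots> \<le> h * (K * norm (q h - G y))"
      using h K[of r] r by (simp add: norm_blinfun_apply_le)
    also have "\<dots> \<le> h * (K * e h)"
      using h K[of r] r by (intro mult_left_mono) (auto simp: e_def order_trans[OF norm_ge_zero])
    finally show ?thesis
      using h by simp
  next
    case False
    define h where "h = r - u"
    have h: "0 < h" "r = u + h" "norm (u - r) = h"
      using False u by (simp_all add: h_def)
    have "U u y - U r y - (u - r) *\<^sub>R U r (G y) = h *\<^sub>R U u (U h (G y) - G y) - h *\<^sub>R U u (q h - G y)"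
      using h U u by (simp add: q_def c0_semigroup_apply_add blinfun.diff_right blinfun.add_right
          blinfun.scaleR_right scaleR_right_diff_distrib scaleR_right_distrib algebra_simps)
    also have "norm \<dots> \<le> h * (K * norm (U h (G y) - G y)) + h * (K * norm (q h - G y))"
      using h K[of u] u
      by (intro norm_triangle_le_diff add_mono) (simp_all add: norm_blinfun_apply_le)
    also have "\<dots> = h * (K * e h)"
      by (simp add: e_def algebra_simps)
    finally show ?thesis
      using h by simp
  qed
  have "((\<lambda>u. norm (u - r)) \<longlongrightarrow> 0) (at r within {0..})"
    by (intro tendsto_norm_zero LIM_zero tendsto_ident_at)
  then have "filterlim (\<lambda>u. norm (u - r)) (at_right 0) (at r within {0..})"
    unfolding filterlim_at by (auto intro!: always_eventually simp: eventually_at_filter)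
  then have "((\<lambda>u. K * e (norm (u - r))) \<longlongrightarrow> 0) (at r within {0..})"
    using tendsto_mult_right_zero[OF filterlim_compose[OF e]] by blast
  moreover have "\<forall>\<^sub>F u in at r within {0..}.
      norm ((U u y - U r y - (u - r) *\<^sub>R U r (G y)) /\<^sub>R norm (u - r)) \<le> K * e (norm (u - r))"
    unfolding eventually_at
  proof (intro exI[of _ 1] conjI ballI impI)
    fix u :: real
    assume "u \<in> {0..}" "u \<noteq> r \<and> dist u r < 1"
    then have "u \<in> {0..r + 1}" "0 < norm (u - r)"
      by (auto simp: dist_real_def)
    let ?X = "U u y - U r y - (u - r) *\<^sub>R U r (G y)"
    have "norm ?X / norm (u - r) \<le> K * e (norm (u - r))"
      using increment[of u] \<open>u \<in> {0..r + 1}\<close> \<open>0 < norm (u - r)\<close>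
      by (simp add: pos_divide_le_eq mult.commute)
    then show "norm (?X /\<^sub>R norm (u - r)) \<le> K * e (norm (u - r))"
      by (simp add: divide_inverse mult.commute)
  qed simp
  ultimately have "((\<lambda>u. (U u y - U r y - (u - r) *\<^sub>R U r (G y)) /\<^sub>R norm (u - r)) \<longlongrightarrow> 0)
      (at r within {0..})"
    by (rule Lim_null_comparison[rotated])
  then show ?thesis
    by (simp add: has_vector_derivative_def has_derivative_at_within bounded_linear_scaleR_left)
qed

lemma vector_derivative_bound:
  fixes f f' :: "real \<Rightarrow> 'a::real_normed_vector"
  assumes "0 \<le> s"
    and deriv: "\<And>u. u \<in> {0..s} \<Longrightarrow> (f has_vector_derivative f' u) (at u within {0..s})"
    and bound: "\<And>u. u \<in> {0..s} \<Longrightarrow> norm (f' u) \<le> C"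
  shows "norm (f s - f 0) \<le> s * C"
proof -
  have "norm (f s - f 0) \<le> C * norm (s - 0)"
  proof (rule differentiable_bound[of "{0..s}" f "\<lambda>u h. h *\<^sub>R f' u"])
    show "(f has_derivative (\<lambda>h. h *\<^sub>R f' u)) (at u within {0..s})" if "u \<in> {0..s}" for u
      using deriv[OF that] by (simp add: has_vector_derivative_def)
    show "onorm (\<lambda>h. h *\<^sub>R f' u) \<le> C" if "u \<in> {0..s}" for u
      using bound[OF that] by (simp add: onorm_scaleR_left[OF bounded_linear_ident] onorm_id)
  qed (use \<open>0 \<le> s\<close> in auto)
  then show ?thesis
    using \<open>0 \<le> s\<close> by (simp add: mult.commute)
qed

lemma vector_derivative_linearization_bound:
  fixes f f' :: "real \<Rightarrow> 'a::real_normed_vector"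
  assumes s: "0 \<le> s"
    and deriv: "\<And>u. u \<in> {0..s} \<Longrightarrow> (f has_vector_derivative f' u) (at u within {0..s})"
    and bound: "\<And>u. u \<in> {0..s} \<Longrightarrow> norm (f' u - f' 0) \<le> u * C"
  shows "norm (f s - f 0 - s *\<^sub>R f' 0) \<le> s * (s * C)"
proof (cases "s = 0")
  case False
  have "0 \<le> s * C"
    using bound[of s] s by (meson atLeastAtMost_iff norm_ge_zero order_refl order_trans)
  then have "0 \<le> C"
    using False s by (simp add: zero_le_mult_iff)
  then have "norm (f' u - f' 0) \<le> s * C" if "u \<in> {0..s}" for u
    using that bound[OF that] by (meson atLeastAtMost_iff mult_right_mono order_trans)
  then have "norm (f s - f 0 - (s - 0) *\<^sub>R f' 0) \<le> norm (s - 0) * (s * C)"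
    using deriv s by (intro vector_differentiable_bound_linearization[where S = "{0..s}"])
      (auto simp: closed_segment_eq_real_ivl)
  then show ?thesis
    using s by simp
qed simp

lemma c0_semigroup_orbit_lipschitz:
  assumes U: "c0_semigroup U" and G: "is_generator U G E" and y: "y \<in> E" and s: "0 \<le> s"
    and K: "\<And>u. u \<in> {0..s} \<Longrightarrow> norm (U u) \<le> K"
  shows "norm (U s y - y) \<le> s * (K * norm (G y))"
  using vector_derivative_bound[of s "\<lambda>u. U u y" "\<lambda>u. U u (G y)"] U s K
    has_vector_derivative_within_subset[OF c0_semigroup_orbit_has_vector_derivative[OF U G y]]
  by (simp add: norm_blinfun_apply_le subset_eq)

lemma c0_semigroup_orbit_taylor2:
  assumes U: "c0_semigroup U" and G: "is_generator U G E" and y: "y \<in> E" "G y \<in> E"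
    and s: "0 \<le> s" and K: "\<And>u. u \<in> {0..s} \<Longrightarrow> norm (U u) \<le> K"
  shows "norm (U s y - y - s *\<^sub>R G y) \<le> s * (s * (K * norm (G (G y))))"
proof -
  have "norm (U u (G y) - G y) \<le> u * (K * norm (G (G y)))" if "u \<in> {0..s}" for u
    using that K by (intro c0_semigroup_orbit_lipschitz[OF U G y(2)]) auto
  then show ?thesis
    using vector_derivative_linearization_bound[of s "\<lambda>u. U u y" "\<lambda>u. U u (G y)"] U s
      has_vector_derivative_within_subset[OF c0_semigroup_orbit_has_vector_derivative[OF U G y(1)]]
    by (simp add: subset_eq)
qed

section \<open>Accumulation of errors under iteration\<close>

lemma blinfun_pow_iteration_error:
  fixes W :: "'a::real_normed_vector \<Rightarrow>\<^sub>L 'a" and a :: "nat \<Rightarrow> 'a"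
  assumes "norm W \<le> 1"
  shows "norm (a n - blinfun_pow W n (a 0)) \<le> (\<Sum>k<n. norm (a (Suc k) - W (a k)))"
proof (induction n)
  case (Suc n)
  have "a (Suc n) - blinfun_pow W (Suc n) (a 0)
      = (a (Suc n) - W (a n)) + W (a n - blinfun_pow W n (a 0))"
    by (simp add: blinfun_pow_Suc blinfun.diff_right)
  also have "norm \<dots> \<le> norm (a (Suc n) - W (a n)) + norm (a n - blinfun_pow W n (a 0))"
    using norm_blinfun_apply_le[OF assms] norm_triangle_ineq by (smt (verit))
  finally show ?case
    using Suc.IH by simp
qed simp

lemma linear_recurrence_le:
  fixes \<rho> :: "nat \<Rightarrow> real"
  assumes d: "0 \<le> d" "d < 1" and "0 \<le> \<beta>" and step: "\<And>k. \<rho> (Suc k) \<le> d * (\<beta> + \<rho> k)"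
  shows "\<rho> k \<le> d ^ k * \<rho> 0 + d / (1 - d) * \<beta>"
proof (induction k)
  case (Suc k)
  have "\<rho> (Suc k) \<le> d * (\<beta> + (d ^ k * \<rho> 0 + d / (1 - d) * \<beta>))"
    using step[of k] Suc.IH d by (smt (verit) mult_left_mono)
  also have "\<dots> = d ^ Suc k * \<rho> 0 + d / (1 - d) * \<beta>"
    using d by (simp add: field_simps)
  finally show ?case .
qed (use d \<open>0 \<le> \<beta>\<close> in simp)

section \<open>Leaky projections\<close>

locale leaky_projection =
  fixes T :: "real \<Rightarrow> ('a::banach \<Rightarrow>\<^sub>L 'a)" and L :: "'a \<Rightarrow> 'a" and D :: "'a set"
    and P :: "'a \<Rightarrow>\<^sub>L 'a" and b :: real
  assumes contraction_semigroup: "c0_contraction_semigroup T"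
    and generator: "is_generator T L D"
    and idempotent: "P o\<^sub>L P = P"
    and norm_P: "norm P \<le> 1"
    and leak_nonneg: "0 \<le> b"
    and leak_in: "\<And>s. 0 \<le> s \<Longrightarrow> norm (P o\<^sub>L T s o\<^sub>L (id_blinfun - P)) \<le> s * b"
    and leak_out: "\<And>s. 0 \<le> s \<Longrightarrow> norm ((id_blinfun - P) o\<^sub>L T s o\<^sub>L P) \<le> s * b"
begin

abbreviation compression :: "real \<Rightarrow> 'a \<Rightarrow>\<^sub>L 'a"
  where "compression s \<equiv> P o\<^sub>L T s o\<^sub>L P"

abbreviation LP2_norm :: "'a \<Rightarrow> real"
  where "LP2_norm x \<equiv> norm x + norm (L (P x)) + norm (L (P (L (P x))))"

lemma P_P [simp]: "P (P z) = P z"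
  by (metis blinfun_apply_blinfun_compose idempotent)

lemma norm_P_apply: "norm (P z) \<le> norm z"
  using norm_blinfun_apply_le[OF norm_P] by simp

lemma semigroup: "c0_semigroup T"
  using contraction_semigroup by (simp add: c0_contraction_semigroup_def)

lemma norm_T: "0 \<le> s \<Longrightarrow> norm (T s) \<le> 1"
  using contraction_semigroup by (simp add: c0_contraction_semigroup_def)

lemma norm_T_apply: "0 \<le> s \<Longrightarrow> norm (T s z) \<le> norm z"
  using norm_blinfun_apply_le[OF norm_T] by simp

lemma leak_in_apply: "0 \<le> s \<Longrightarrow> norm (P (T s (z - P z))) \<le> s * b * norm z"
  using norm_blinfun_apply_le[OF leak_in, of s z] by (simp add: blinfun.diff_left)

lemma leak_out_apply: "0 \<le> s \<Longrightarrow> norm (T s (P z) - P (T s (P z))) \<le> s * b * norm z"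
  using norm_blinfun_apply_le[OF leak_out, of s z] by (simp add: blinfun.diff_left)

lemma norm_generator_le:
  assumes v: "v \<in> D" "P v = v"
  shows "norm (L v) \<le> norm (P (L v)) + b * norm v"
proof -
  have "((\<lambda>h. (1 / h) *\<^sub>R (T h v - v) - P ((1 / h) *\<^sub>R (T h v - v))) \<longlongrightarrow> L v - P (L v)) (at_right 0)"
    by (intro tendsto_diff blinfun.tendsto tendsto_const is_generator_tendsto[OF generator v(1)])
  moreover have "\<forall>\<^sub>F h in at_right 0.
      norm ((1 / h) *\<^sub>R (T h v - v) - P ((1 / h) *\<^sub>R (T h v - v))) \<le> b * norm v"
    using eventually_at_right_less[of 0]
  proof eventually_elim
    case (elim h)
    have "(1 / h) *\<^sub>R (T h v - v) - P ((1 / h) *\<^sub>R (T h v - v)) = (1 / h) *\<^sub>R (T h v - P (T h v))"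
      using v(2) by (simp add: blinfun.diff_right blinfun.scaleR_right scaleR_right_diff_distrib)
    moreover have "norm (T h v - P (T h v)) \<le> h * (b * norm v)"
      using leak_out_apply[of h v] v(2) elim by simp
    ultimately show ?case
      using elim by (simp add: divide_le_eq mult.commute)
  qed
  ultimately have "norm (L v - P (L v)) \<le> b * norm v"
    by (rule Lim_norm_ubound[OF trivial_limit_at_right_real])
  then show ?thesis
    using norm_triangle_sub[of "L v" "P (L v)"] by simp
qed

lemma projected_orbit_taylor2:
  assumes z: "z \<in> D" "P (L z) \<in> D" and s: "0 \<le> s"
  shows "norm (P (T s z) - P z - s *\<^sub>R P (L z)) \<le> s * (s * (norm (L (P (L z))) + b * norm (L z)))"
proof -
  have deriv: "((\<lambda>u. P (T u z)) has_vector_derivative P (T u (L z))) (at u within {0..s})"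
    if "u \<in> {0..s}" for u
    using that has_vector_derivative_within_subset[OF
        c0_semigroup_orbit_has_vector_derivative[OF semigroup generator z(1)], of u "{0..s}"]
    by (intro bounded_linear.has_vector_derivative[OF blinfun.bounded_linear_right]) auto
  have bound: "norm (P (T u (L z)) - P (T 0 (L z))) \<le> u * (norm (L (P (L z))) + b * norm (L z))"
    if u: "u \<in> {0..s}" for u
  proof -
    define w where "w = P (L z)"
    text \<open>Split \<open>L z\<close> into \<open>w\<close>, whose orbit is Lipschitz, and its off-range part, which \<open>P T u\<close>
      maps to size \<open>O(u)\<close>.\<close>
    have "P (T u (L z)) - P (T 0 (L z)) = P (T u w - w) + P (T u (L z - P (L z)))"
      using semigroup by (simp add: w_def blinfun.diff_right)
    also have "norm \<dots> \<le> norm (T u w - w) + u * b * norm (L z)"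
      using u norm_P_apply[of "T u w - w"] leak_in_apply[of u "L z"]
      by (smt (verit) atLeastAtMost_iff norm_triangle_ineq)
    also have "\<dots> \<le> u * (1 * norm (L w)) + u * b * norm (L z)"
      using c0_semigroup_orbit_lipschitz[OF semigroup generator, of w u 1] u norm_T z(2)
      by (simp add: w_def)
    finally show ?thesis
      by (simp add: w_def algebra_simps)
  qed
  show ?thesis
    using vector_derivative_linearization_bound[OF s deriv bound] semigroup by simp
qed

lemma norm_compression_le: "0 \<le> s \<Longrightarrow> norm (compression s) \<le> 1"
  using norm_P norm_T[of s]
  by (meson mult_le_one norm_blinfun_compose norm_ge_zero order_trans)

lemma mixing_step_remainder:
  assumes QP: "Q o\<^sub>L P = P" and Q_P: "norm (Q - P) \<le> d" and s: "0 \<le> s"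
  shows "norm (Q (T s v) - P (T s v)) \<le> d * (s * b * norm v + norm (v - P v))"
proof -
  have QP_apply: "Q (P z) = P z" for z
    by (metis QP blinfun_apply_blinfun_compose)
  text \<open>\<open>Q - P\<close> vanishes on the range of \<open>P\<close>, so only the off-range part of \<open>T s (P v)\<close>
    contributes.\<close>
  have "Q (T s v) - P (T s v)
      = (Q - P) (T s (P v) - P (T s (P v))) + (Q - P) (T s (v - P v))"
    by (simp add: blinfun.diff_left blinfun.diff_right QP_apply)
  also have "norm \<dots> \<le> d * norm (T s (P v) - P (T s (P v))) + d * norm (T s (v - P v))"
    using norm_blinfun_apply_le[OF Q_P] by (intro order_trans[OF norm_triangle_ineq] add_mono)
  also have "\<dots> \<le> d * (s * b * norm v) + d * norm (v - P v)"
    using leak_out_apply[OF s, of v] norm_T_apply[OF s, of "v - P v"]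
      order_trans[OF norm_ge_zero Q_P]
    by (intro add_mono mult_left_mono)
  finally show ?thesis
    by (simp add: algebra_simps)
qed

lemma mixing_remainder_bound:
  fixes Q :: "'a \<Rightarrow>\<^sub>L 'a" and x :: 'a
  assumes Q: "norm Q \<le> 1" "Q o\<^sub>L P = P" "P o\<^sub>L Q = P" "norm (Q - P) \<le> d"
    and d: "0 \<le> d" "d < 1" and s: "0 \<le> s"
  defines "v k \<equiv> blinfun_pow (Q o\<^sub>L T s) k x"
  shows "norm (v (Suc k) - P (v (Suc k))) \<le> d ^ Suc k * norm x + d / (1 - d) * (s * b * norm x)"
proof -
  have PQ: "P (Q z) = P z" for z
    by (metis Q(3) blinfun_apply_blinfun_compose)
  have v_Suc: "v (Suc k) = Q (T s (v k))" for k
    by (simp add: v_def blinfun_pow_Suc)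
  have norm_v: "norm (v k) \<le> norm x" for k
    unfolding v_def using Q(1) norm_T[OF s]
    by (intro norm_blinfun_apply_le[where K = 1, simplified] norm_blinfun_pow_le_one)
      (meson mult_le_one norm_blinfun_compose norm_ge_zero order_trans)
  define \<rho> where "\<rho> k = norm (v (Suc k) - P (v (Suc k)))" for k
  have "\<rho> 0 = norm ((Q - P) (T s x))"
    by (simp add: \<rho>_def v_Suc PQ blinfun.diff_left) (simp add: v_def)
  also have "\<dots> \<le> d * norm x"
    using norm_blinfun_apply_le[OF Q(4), of "T s x"] norm_T_apply[OF s, of x] d
    by (meson mult_left_mono order_trans)
  finally have "\<rho> 0 \<le> d * norm x" .
  moreover have "\<rho> (Suc k) \<le> d * (s * b * norm x + \<rho> k)" for k
    using mixing_step_remainder[OF Q(2) Q(4) s, of "v (Suc k)"] norm_v[of "Suc k"] s leak_nonneg d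
    by (simp add: \<rho>_def v_Suc[of "Suc k"] PQ) (smt (verit) mult_left_mono mult_nonneg_nonneg)
  ultimately have "\<rho> k \<le> d ^ k * (d * norm x) + d / (1 - d) * (s * b * norm x)"
    using linear_recurrence_le[OF d, of "s * b * norm x" \<rho> k] s leak_nonneg d
    by (smt (verit) mult_left_mono mult_nonneg_nonneg norm_ge_zero zero_le_power)
  then show ?thesis
    by (simp add: \<rho>_def mult.assoc mult.left_commute)
qed

lemma mixing_remainder_sum:
  fixes Q :: "'a \<Rightarrow>\<^sub>L 'a" and x :: 'a
  assumes Q: "norm Q \<le> 1" "Q o\<^sub>L P = P" "P o\<^sub>L Q = P" "norm (Q - P) \<le> d"
    and d: "0 \<le> d" "d < 1" and s: "0 \<le> s"
  defines "v k \<equiv> blinfun_pow (Q o\<^sub>L T s) k x"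
  shows "(\<Sum>k<n. norm (v k - P (v k)))
    \<le> 2 * norm x / (1 - d) + real n * (d / (1 - d) * (s * b * norm x))"
proof -
  have rem: "norm (v k - P (v k)) \<le> 2 * norm x * d ^ k + d / (1 - d) * (s * b * norm x)" for k
  proof (cases k)
    case 0
    have "norm (x - P x) \<le> 2 * norm x"
      using norm_triangle_ineq4[of x "P x"] norm_P_apply[of x] by simp
    moreover have "0 \<le> d / (1 - d) * (s * b * norm x)"
      using d s leak_nonneg by simp
    ultimately show ?thesis
      using 0 by (simp add: v_def)
  next
    case (Suc k')
    have "d ^ k * norm x \<le> 2 * norm x * d ^ k"
      using d by simp
    then show ?thesis
      using mixing_remainder_bound[OF Q d s, where x = x and k = k'] unfolding v_def Suc by linarith
  qed
  have "(\<Sum>k<n. norm (v k - P (v k))) \<le> (\<Sum>k<n. 2 * norm x * d ^ k + d / (1 - d) * (s * b * norm x))"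
    by (rule sum_mono) (rule rem)
  also have "\<dots> = 2 * norm x * (\<Sum>k<n. d ^ k) + real n * (d / (1 - d) * (s * b * norm x))"
    by (simp add: sum.distrib sum_distrib_left)
  also have "\<dots> \<le> 2 * norm x * (1 / (1 - d)) + real n * (d / (1 - d) * (s * b * norm x))"
    using d by (intro add_right_mono mult_left_mono) (simp_all add: sum_gp_strict divide_right_mono)
  finally show ?thesis
    by simp
qed

lemma mixing_range_error:
  fixes Q :: "'a \<Rightarrow>\<^sub>L 'a" and x :: 'a
  assumes PQ: "P o\<^sub>L Q = P" and s: "0 \<le> s"
  defines "v k \<equiv> blinfun_pow (Q o\<^sub>L T s) k x"
  shows "norm (P (v n) - blinfun_pow (compression s) n (P x))
    \<le> s * b * (\<Sum>k<n. norm (v k - P (v k)))"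
proof -
  have PQ_apply: "P (Q z) = P z" for z
    by (metis PQ blinfun_apply_blinfun_compose)
  have "norm (P (v (Suc k)) - compression s (P (v k))) \<le> s * b * norm (v k - P (v k))" for k
    using leak_in_apply[OF s, of "v k - P (v k)"]
    by (simp add: v_def blinfun_pow_Suc PQ_apply blinfun.diff_right)
  then have "(\<Sum>k<n. norm (P (v (Suc k)) - compression s (P (v k))))
      \<le> s * b * (\<Sum>k<n. norm (v k - P (v k)))"
    by (simp add: sum_distrib_left sum_mono)
  moreover have "norm (P (v n) - blinfun_pow (compression s) n (P (v 0)))
      \<le> (\<Sum>k<n. norm (P (v (Suc k)) - compression s (P (v k))))"
    by (rule blinfun_pow_iteration_error[OF norm_compression_le[OF s]])
  ultimately show ?thesis
    by (simp add: v_def)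
qed

end

section \<open>The compressed semigroup\<close>

locale compressed_dynamics = leaky_projection +
  fixes S :: "real \<Rightarrow> ('a::banach \<Rightarrow>\<^sub>L 'a)"
  assumes compressed_semigroup: "c0_semigroup S"
    and compressed_generator: "is_generator S (\<lambda>x. P (L (P x))) {x. P x \<in> D}"
begin

lemma compressed_orbit_in_range:
  assumes x: "P x \<in> D" and r: "0 \<le> r"
  shows "P (S r (P x)) = S r (P x)"
proof -
  have Px: "P x \<in> {x. P x \<in> D}"
    using x by simp
  have zero: "((\<lambda>u. S u (P x) - P (S u (P x))) has_vector_derivative 0) (at u within {0..r})"
    if u: "u \<in> {0..r}" for u
  proof -
    have orbit: "((\<lambda>u. S u (P x)) has_vector_derivative S u (P (L (P (P x))))) (at u within {0..r})"
      using u has_vector_derivative_within_subset[OF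
          c0_semigroup_orbit_has_vector_derivative[OF compressed_semigroup compressed_generator Px]]
      by auto
    text \<open>The derivative \<open>S u (P L P (P x)) = P L P (S u (P x))\<close> lies in the range of \<open>P\<close>.\<close>
    have "S u (P (L (P (P x)))) = P (L (P (S u (P x))))"
      using is_generator_semigroup_commute[OF compressed_semigroup compressed_generator Px] u
      by simp
    then show ?thesis
      using has_vector_derivative_diff[OF orbit
          bounded_linear.has_vector_derivative[OF blinfun.bounded_linear_right orbit, of P]]
      by simp
  qed
  have "norm ((S r (P x) - P (S r (P x))) - (S 0 (P x) - P (S 0 (P x)))) \<le> r * 0"
    using vector_derivative_bound[OF r zero, of 0] by simp
  then show ?thesis
    using compressed_semigroup by simp
qed

lemma compressed_step_error:
  assumes x: "P x \<in> D" "P (L (P x)) \<in> D" and r: "0 \<le> r" and s: "0 \<le> s"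
    and KS: "1 \<le> KS" "norm (S r) \<le> KS" "\<And>u. u \<in> {0..s} \<Longrightarrow> norm (S u) \<le> KS"
  shows "norm (P (T s (P (S r (P x)))) - S s (S r (P x)))
    \<le> s * s * (KS * (1 + KS + 2 * b + b\<^sup>2) * LP2_norm x)"
proof -
  define y where "y = S r (P x)"
  have Px: "P x \<in> {x. P x \<in> D}" and APx: "P (L (P (P x))) \<in> {x. P x \<in> D}"
    using x by simp_all
  note commute = is_generator_semigroup_commute[OF compressed_semigroup compressed_generator _ r]
  note mem = is_generator_semigroup_mem[OF compressed_semigroup compressed_generator _ r]
  have Py: "P y = y"
    unfolding y_def using compressed_orbit_in_range[OF x(1) r] .
  have Ay: "P (L y) = S r (P (L (P x)))"
    using commute[OF Px] Py by (simp add: y_def)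
  have AAy: "P (L (P (L y))) = S r (P (L (P (L (P x)))))"
    using commute[OF APx] compressed_orbit_in_range[OF x(2) r] by (simp add: Ay)
  have yD: "y \<in> D"
    using mem[OF Px] Py by (simp add: y_def)
  have AyD: "P (L y) \<in> D"
    using mem[OF APx] compressed_orbit_in_range[OF x(2) r] by (simp add: Ay)
  have T_part:
    "norm (P (T s y) - y - s *\<^sub>R P (L y)) \<le> s * (s * (norm (L (P (L y))) + b * norm (L y)))"
    using projected_orbit_taylor2[OF yD AyD s] by (simp add: Py)
  have S_part: "norm (S s y - y - s *\<^sub>R P (L y)) \<le> s * (s * (KS * norm (P (L (P (L y))))))"
    using c0_semigroup_orbit_taylor2[OF compressed_semigroup compressed_generator _ _ s KS(3), of y]
      yD AyD by (simp add: Py)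
  have Ly: "norm (L y) \<le> norm (P (L y)) + b * norm y"
    by (rule norm_generator_le[OF yD Py])
  have LAy: "norm (L (P (L y))) \<le> norm (P (L (P (L y)))) + b * norm (P (L y))"
    by (rule norm_generator_le[OF AyD P_P])
  have S_r: "norm (S r (P z)) \<le> KS * norm z" for z
    using norm_blinfun_apply_le[OF KS(2), of "P z"] norm_P_apply[of z] KS(1)
    by (smt (verit) mult_left_mono)
  have ny: "norm y \<le> KS * norm x"
    unfolding y_def by (rule S_r)
  have nAy: "norm (P (L y)) \<le> KS * norm (L (P x))"
    unfolding Ay by (rule S_r)
  have nAAy: "norm (P (L (P (L y)))) \<le> KS * norm (L (P (L (P x))))"
    unfolding AAy by (rule S_r)
  define C where "C = 1 + KS + 2 * b + b\<^sup>2"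
  have "norm (P (T s y) - S s y)
      \<le> s * s * (norm (L (P (L y))) + b * norm (L y) + KS * norm (P (L (P (L y)))))"
    using T_part S_part
      norm_triangle_ineq4[of "P (T s y) - y - s *\<^sub>R P (L y)" "S s y - y - s *\<^sub>R P (L y)"]
    by (simp add: algebra_simps)
  also have "\<dots> \<le> s * s * ((1 + KS) * norm (P (L (P (L y)))) + 2 * b * norm (P (L y)) + b\<^sup>2 * norm y)"
    using LAy mult_left_mono[OF Ly leak_nonneg] s
    by (intro mult_left_mono) (simp_all add: algebra_simps power2_eq_square)
  also have "\<dots> \<le> s * s * (C * (norm (P (L (P (L y)))) + norm (P (L y)) + norm y))"
    using s leak_nonneg KS(1)
    by (intro mult_left_mono)
      (simp_all add: C_def distrib_left distrib_right add_mono mult_right_mono)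
  also have "\<dots> \<le> s * s * (C * (KS * LP2_norm x))"
    using ny nAy nAAy s leak_nonneg KS(1)
    by (intro mult_left_mono) (simp_all add: C_def algebra_simps)
  finally have "norm (P (T s (P y)) - S s y)
      \<le> s * s * (KS * C * LP2_norm x)"
    by (simp add: Py algebra_simps)
  then show ?thesis
    by (simp add: y_def C_def)
qed

lemma compressed_chernoff_error:
  assumes x: "P x \<in> D" "P (L (P x)) \<in> D" and s: "0 \<le> s"
    and KS: "1 \<le> KS" "\<And>u. u \<in> {0..real n * s} \<Longrightarrow> norm (S u) \<le> KS"
  shows "norm (blinfun_pow (compression s) n (P x) - S (real n * s) (P x))
    \<le> real n * (s * s * (KS * (1 + KS + 2 * b + b\<^sup>2) * LP2_norm x))"
proof -
  define a where "a k = S (real k * s) (P x)" for k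
  define \<epsilon> where "\<epsilon> = s * s * (KS * (1 + KS + 2 * b + b\<^sup>2) * LP2_norm x)"
  have step: "norm (a (Suc k) - compression s (a k)) \<le> \<epsilon>" if "k \<in> {..<n}" for k
  proof -
    have "real k * s \<le> real n * s" "1 * s \<le> real n * s"
      using that s by (intro mult_right_mono; simp)+
    then have "norm (S (real k * s)) \<le> KS" "\<And>u. u \<in> {0..s} \<Longrightarrow> norm (S u) \<le> KS"
      using KS(2) s by auto
    moreover have "a (Suc k) = S s (a k)"
      using s compressed_semigroup by (simp add: a_def c0_semigroup_apply_add algebra_simps)
    ultimately show ?thesis
      using compressed_step_error[OF x _ s KS(1), of "real k * s"] s
      by (simp add: a_def \<epsilon>_def norm_minus_commute)
  qed
  have "norm (a n - blinfun_pow (compression s) n (a 0))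
      \<le> (\<Sum>k<n. norm (a (Suc k) - compression s (a k)))"
    by (rule blinfun_pow_iteration_error[OF norm_compression_le[OF s]])
  also have "\<dots> \<le> real n * \<epsilon>"
    using sum_bounded_above[of "{..<n}", OF step] by simp
  finally show ?thesis
    using compressed_semigroup by (simp add: a_def \<epsilon>_def norm_minus_commute)
qed

lemma product_formula_error_split:
  assumes Q: "norm Q \<le> 1" "Q o\<^sub>L P = P" "P o\<^sub>L Q = P" "norm (Q - P) \<le> d"
    and d: "0 \<le> d" "d < 1" and n: "1 \<le> n" and x: "P x \<in> D" "P (L (P x)) \<in> D" and s: "0 \<le> s"
    and KS: "1 \<le> KS" "\<And>u. u \<in> {0..real n * s} \<Longrightarrow> norm (S u) \<le> KS"
  defines "q \<equiv> d / (1 - d)" and "E \<equiv> KS * (1 + KS + 2 * b + b\<^sup>2)"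
  shows "norm (blinfun_pow (Q o\<^sub>L T s) n x - S (real n * s) (P x))
    \<le> s * b * (2 * norm x / (1 - d) + real n * (q * (s * b * norm x)))
      + real n * (s * s * (E * LP2_norm x)) + (d ^ n * norm x + q * (s * b * norm x))"
proof -
  define v where "v k = blinfun_pow (Q o\<^sub>L T s) k x" for k
  let ?w = "blinfun_pow (compression s) n (P x)"
  have "norm (P (v n) - ?w) \<le> s * b * (\<Sum>k<n. norm (v k - P (v k)))"
    using mixing_range_error[OF Q(3) s] by (simp add: v_def)
  also have "\<dots> \<le> s * b * (2 * norm x / (1 - d) + real n * (q * (s * b * norm x)))"
    using mixing_remainder_sum[OF Q d s] s leak_nonneg
    by (intro mult_left_mono) (simp_all add: v_def q_def)
  finally have range:
    "norm (P (v n) - ?w) \<le> s * b * (2 * norm x / (1 - d) + real n * (q * (s * b * norm x)))" .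
  have chernoff: "norm (?w - S (real n * s) (P x)) \<le> real n * (s * s * (E * LP2_norm x))"
    using compressed_chernoff_error[OF x s KS] by (simp add: E_def)
  have tail: "norm (v n - P (v n)) \<le> d ^ n * norm x + q * (s * b * norm x)"
    using mixing_remainder_bound[OF Q d s, where x = x and k = "n - 1"] n by (simp add: v_def q_def)
  have "norm (v n - S (real n * s) (P x))
      = norm ((P (v n) - ?w) + (?w - S (real n * s) (P x)) + (v n - P (v n)))"
    by simp
  also have "\<dots> \<le> norm (P (v n) - ?w) + norm (?w - S (real n * s) (P x)) + norm (v n - P (v n))"
    using norm_triangle_ineq[of "P (v n) - ?w + (?w - S (real n * s) (P x))" "v n - P (v n)"]
      norm_triangle_ineq[of "P (v n) - ?w" "?w - S (real n * s) (P x)"]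
    by linarith
  finally have "norm (v n - S (real n * s) (P x))
    \<le> s * b * (2 * norm x / (1 - d) + real n * (q * (s * b * norm x)))
      + real n * (s * s * (E * LP2_norm x)) + (d ^ n * norm x + q * (s * b * norm x))"
    using range chernoff tail by linarith
  then show ?thesis
    by (simp add: v_def)
qed

lemma product_formula_error:
  assumes Q: "norm Q \<le> 1" "Q o\<^sub>L P = P" "P o\<^sub>L Q = P" "norm (Q - P) \<le> d"
    and d: "0 \<le> d" "d < 1" and t: "0 \<le> t"
  shows "\<exists>c>0. \<forall>n::nat. n \<ge> 1 \<longrightarrow> (\<forall>x. P x \<in> D \<and> P (L (P x)) \<in> D \<longrightarrow>
    norm (blinfun_pow (Q o\<^sub>L T (t / real n)) n x - S t (P x))
      \<le> c / real n * LP2_norm x + d ^ n * norm x)"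
proof -
  obtain KS where KS: "1 \<le> KS" "\<And>u. u \<in> {0..t} \<Longrightarrow> norm (S u) \<le> KS"
    using c0_semigroup_bounded_on_interval[OF compressed_semigroup] by metis
  define q where "q = d / (1 - d)"
  define E where "E = KS * (1 + KS + 2 * b + b\<^sup>2)"
  define c0 where "c0 = t * b * (2 / (1 - d) + t * b * q + q)"
  have c0: "0 \<le> c0" and E: "0 \<le> E"
    using t d leak_nonneg KS(1) by (simp_all add: c0_def q_def E_def)
  have "norm (blinfun_pow (Q o\<^sub>L T (t / real n)) n x - S t (P x))
      \<le> (c0 + t\<^sup>2 * E + 1) / real n * LP2_norm x + d ^ n * norm x"
    if n: "1 \<le> n" and x: "P x \<in> D" "P (L (P x)) \<in> D" for n x
  proof -
    define s where "s = t / real n"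
    have s: "0 \<le> s" "real n * s = t"
      using n t by (simp_all add: s_def)
    have "s * b * (2 * norm x / (1 - d) + real n * (q * (s * b * norm x)))
        + real n * (s * s * (E * LP2_norm x)) + (d ^ n * norm x + q * (s * b * norm x))
      = (c0 * norm x + t\<^sup>2 * E * LP2_norm x) / real n + d ^ n * norm x"
      using n d unfolding c0_def s(2)[symmetric] by (simp add: s_def field_simps power2_eq_square)
    also have "\<dots> \<le> (c0 + t\<^sup>2 * E + 1) / real n * LP2_norm x + d ^ n * norm x"
    proof -
      have "c0 * norm x + t\<^sup>2 * E * LP2_norm x \<le> (c0 + t\<^sup>2 * E + 1) * LP2_norm x"
        using c0 mult_left_mono[of "norm x" "LP2_norm x" c0] by (simp add: algebra_simps)
      then show ?thesis
        using n by (simp add: divide_right_mono)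
    qed
    finally show ?thesis
      using product_formula_error_split[OF Q d n x s(1) KS(1)] KS(2) s
      unfolding q_def E_def by (simp add: s_def)
  qed
  moreover have "0 < c0 + t\<^sup>2 * E + 1"
    using c0 mult_nonneg_nonneg[OF zero_le_power2[of t] E] by linarith
  ultimately show ?thesis
    by blast
qed

end

theorem corollary3p3:
  fixes T S :: "real \<Rightarrow> ('a::banach \<Rightarrow>\<^sub>L 'a)"
    and L :: "'a \<Rightarrow> 'a" and D :: "'a set"
    and M P :: "'a \<Rightarrow>\<^sub>L 'a"
    and ct \<delta> b t :: real
  assumes semigroup: "c0_contraction_semigroup T"
    and gen: "is_generator T L D"
    and M_contr: "norm M \<le> 1"
    and P_proj: "P o\<^sub>L P = P"
    and \<delta>: "0 < \<delta>" "\<delta> < 1"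
    and ct: "0 \<le> ct"
    and conv: "\<And>n. n \<ge> 1 \<Longrightarrow> norm (blinfun_pow M n - P) \<le> ct * \<delta> ^ n"
    and b: "0 \<le> b"
    and leak1: "\<And>s. s \<ge> 0 \<Longrightarrow> norm (P o\<^sub>L T s o\<^sub>L (id_blinfun - P)) \<le> s * b"
    and leak2: "\<And>s. s \<ge> 0 \<Longrightarrow> norm ((id_blinfun - P) o\<^sub>L T s o\<^sub>L P) \<le> s * b"
    and S_sg: "c0_semigroup S"
    and S_gen: "is_generator S (\<lambda>x. P (L (P x))) {x. P x \<in> D}"
    and t: "0 \<le> t"
  shows "\<exists>c>0. \<exists>n0::nat. ct * \<delta> ^ n0 < 1 \<and>
           (\<forall>n::nat. n \<ge> 1 \<longrightarrow> (\<forall>x. P x \<in> D \<and> P (L (P x)) \<in> D \<longrightarrow>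
              norm (blinfun_apply (blinfun_pow (blinfun_pow M n0 o\<^sub>L T (t / real n)) n) x
                    - S t (P x))
              \<le> c / real n * (norm x + norm (L (P x)) + norm (L (P (L (P x)))))
                 + (ct * \<delta> ^ n0) ^ n * norm x))"
proof -
  have geometric: "(\<lambda>n. ct * \<delta> ^ n) \<longlonglongrightarrow> 0"
    using \<delta> by (intro tendsto_mult_right_zero LIMSEQ_power_zero) simp
  have "\<forall>\<^sub>F n in sequentially. norm (blinfun_pow M n - P) \<le> ct * \<delta> ^ n"
    using eventually_ge_at_top[of 1] by eventually_elim (rule conv)
  then have "(\<lambda>n. blinfun_pow M n - P) \<longlonglongrightarrow> 0"
    by (rule Lim_null_comparison[OF _ geometric])
  then have M_lim: "(\<lambda>n. blinfun_pow M n) \<longlonglongrightarrow> P"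
    by (rule LIM_zero_cancel)
  obtain n0 :: nat where n0: "1 \<le> n0" "ct * \<delta> ^ n0 < 1"
    using eventually_conj[OF eventually_ge_at_top[of 1] order_tendstoD(2)[OF geometric, of 1]]
    by (auto simp: eventually_sequentially)
  interpret compressed_dynamics T L D P b S
    using semigroup gen P_proj norm_blinfun_pow_limit_le_one[OF M_contr M_lim] b leak1 leak2
      S_sg S_gen
    by unfold_locales auto
  have "norm (blinfun_pow M n0) \<le> 1" "blinfun_pow M n0 o\<^sub>L P = P" "P o\<^sub>L blinfun_pow M n0 = P"
    using norm_blinfun_pow_le_one[OF M_contr] blinfun_pow_absorb_right blinfun_pow_absorb_left
      blinfun_pow_limit_absorb_right[OF M_lim] blinfun_pow_limit_absorb_left[OF M_lim] by auto
  from product_formula_error[OF this conv[OF n0(1)] _ n0(2) t] n0(2) ct \<delta>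
  show ?thesis
    by auto
qed

end
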